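(* Let $I$ be a $\ast$-homog ideal of $D$ and let $M(I)$ be the unique maximal $\ast$-ideal containing $I$. Then $ID_{M(I)}\cap D=I$.
   Context: $D$ is an integral domain and $\ast$ is a star operation on $D$ of finite character. A $\ast$-ideal is a nonzero fractional ideal $I$ with $I^\ast=I$; it is of finite type if $I=J^\ast$ for some nonzero finitely generated $J$. A maximal $\ast$-ideal is an integral $\ast$-ideal maximal among proper integral $\ast$-ideals. A $\ast$-homog ideal of $D$ is an integral $\ast$-ideal $I$ of finite type with $I\subsetneq D$ such that $(J+L)^{\ast}\neq D$ for every pair $J,L$ of proper integral $\ast$-ideals of finite type containing $I$. Every $\ast$-homog ideal $I$ is contained in exactly one maximal $\ast$-ideal, denoted $M(I)$ (explicitly $M(I)=\{x\in D:(xD+I)^\ast\neq D\}$). *)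

theory Defs
  imports Main
begin

text \<open>The integral domain D is represented as a subring of an ambient field 'a
(every integral domain embeds in its quotient field). Fractional ideals live in
the quotient field of D, which we describe inside 'a.\<close>

definition subdomain :: "'a::field set \<Rightarrow> bool" where
  "subdomain D \<longleftrightarrow> 0 \<in> D \<and> 1 \<in> D \<and>
     (\<forall>x\<in>D. \<forall>y\<in>D. x + y \<in> D \<and> x - y \<in> D \<and> x * y \<in> D)"

definition quot_field :: "'a::field set \<Rightarrow> 'a set" where
  "quot_field D = {a / b | a b. a \<in> D \<and> b \<in> D \<and> b \<noteq> 0}"

definition dmodule :: "'a::field set \<Rightarrow> 'a set \<Rightarrow> bool" where
  "dmodule D I \<longleftrightarrow> 0 \<in> I \<and> (\<forall>x\<in>I. \<forall>y\<in>I. x + y \<in> I) \<and> (\<forall>d\<in>D. \<forall>x\<in>I. d * x \<in> I)"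

definition frac_ideal :: "'a::field set \<Rightarrow> 'a set \<Rightarrow> bool" where
  "frac_ideal D I \<longleftrightarrow> dmodule D I \<and> I \<noteq> {0} \<and> (\<exists>d\<in>D. d \<noteq> 0 \<and> (\<forall>x\<in>I. d * x \<in> D))"

definition lin_span_in :: "'a::field set \<Rightarrow> 'a set \<Rightarrow> 'a set" where
  "lin_span_in D S = {x. \<exists>(n::nat) c s. (\<forall>k<n. c k \<in> D \<and> s k \<in> S) \<and> x = (\<Sum>k<n. c k * s k)}"

definition fin_gen :: "'a::field set \<Rightarrow> 'a set \<Rightarrow> bool" where
  "fin_gen D J \<longleftrightarrow> (\<exists>S. finite S \<and> J = lin_span_in D S)"

definition scal :: "'a::field \<Rightarrow> 'a set \<Rightarrow> 'a set" where
  "scal x I = (\<lambda>y. x * y) ` I"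

definition ideal_mult :: "'a::field set \<Rightarrow> 'a set \<Rightarrow> 'a set" where
  "ideal_mult A B = {x. \<exists>(n::nat) f g. (\<forall>k<n. f k \<in> A \<and> g k \<in> B) \<and> x = (\<Sum>k<n. f k * g k)}"

definition ideal_sum :: "'a::field set \<Rightarrow> 'a set \<Rightarrow> 'a set" where
  "ideal_sum A B = {a + b | a b. a \<in> A \<and> b \<in> B}"

definition localization :: "'a::field set \<Rightarrow> 'a set \<Rightarrow> 'a set" where
  "localization D M = {a / s | a s. a \<in> D \<and> s \<in> D \<and> s \<notin> M}"

definition star_op :: "'a::field set \<Rightarrow> ('a set \<Rightarrow> 'a set) \<Rightarrow> bool" where
  "star_op D st \<longleftrightarrow>
     (\<forall>I. frac_ideal D I \<longrightarrow> frac_ideal D (st I)) \<and>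
     (\<forall>x\<in>quot_field D - {0}. st (scal x D) = scal x D) \<and>
     (\<forall>x\<in>quot_field D - {0}. \<forall>I. frac_ideal D I \<longrightarrow> st (scal x I) = scal x (st I)) \<and>
     (\<forall>I. frac_ideal D I \<longrightarrow> I \<subseteq> st I) \<and>
     (\<forall>I J. frac_ideal D I \<longrightarrow> frac_ideal D J \<longrightarrow> I \<subseteq> J \<longrightarrow> st I \<subseteq> st J) \<and>
     (\<forall>I. frac_ideal D I \<longrightarrow> st (st I) = st I)"

definition finite_character :: "'a::field set \<Rightarrow> ('a set \<Rightarrow> 'a set) \<Rightarrow> bool" where
  "finite_character D st \<longleftrightarrow>
     (\<forall>I. frac_ideal D I \<longrightarrow>
        st I = \<Union>{st J | J. frac_ideal D J \<and> fin_gen D J \<and> J \<subseteq> I})"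

definition star_ideal :: "'a::field set \<Rightarrow> ('a set \<Rightarrow> 'a set) \<Rightarrow> 'a set \<Rightarrow> bool" where
  "star_ideal D st I \<longleftrightarrow> frac_ideal D I \<and> st I = I"

definition finite_type :: "'a::field set \<Rightarrow> ('a set \<Rightarrow> 'a set) \<Rightarrow> 'a set \<Rightarrow> bool" where
  "finite_type D st I \<longleftrightarrow> star_ideal D st I \<and>
     (\<exists>J. frac_ideal D J \<and> fin_gen D J \<and> I = st J)"

definition max_star_ideal :: "'a::field set \<Rightarrow> ('a set \<Rightarrow> 'a set) \<Rightarrow> 'a set \<Rightarrow> bool" where
  "max_star_ideal D st M \<longleftrightarrow> star_ideal D st M \<and> M \<subset> D \<and>
     (\<forall>N. star_ideal D st N \<and> N \<subset> D \<and> M \<subseteq> N \<longrightarrow> N = M)"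

definition star_homog :: "'a::field set \<Rightarrow> ('a set \<Rightarrow> 'a set) \<Rightarrow> 'a set \<Rightarrow> bool" where
  "star_homog D st I \<longleftrightarrow> finite_type D st I \<and> I \<subset> D \<and>
     (\<forall>J L. finite_type D st J \<and> J \<subset> D \<and> I \<subseteq> J \<longrightarrow>
            finite_type D st L \<and> L \<subset> D \<and> I \<subseteq> L \<longrightarrow>
            st (ideal_sum J L) \<noteq> D)"

end

theory Submission
  imports Defs
begin

text \<open>
  Let \<open>x \<in> I D\<^sub>M \<inter> D\<close>; clearing denominators gives \<open>s \<in> D - M\<close> with \<open>s x \<in> I\<close>.
  Write \<open>I = J\<^sup>*\<close> with \<open>J\<close> finitely generated and put \<open>P = J + s D\<close>, so that \<open>x P \<subseteq> I\<close>.
  If \<open>P\<^sup>* \<noteq> D\<close>, then \<open>P\<^sup>*\<close> is a proper \<open>*\<close>-ideal of finite type above \<open>I\<close>. Since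
  \<open>(M + s D)\<^sup>* = D\<close> and \<open>*\<close> has finite character, \<open>1\<close> lies in the \<open>*\<close>-closure of finitely
  many elements \<open>m\<^sub>i + s d\<^sub>i\<close> with \<open>m\<^sub>i \<in> M\<close>; then \<open>L = (J + \<Sum> m\<^sub>i D)\<^sup>*\<close> is a proper
  \<open>*\<close>-ideal of finite type above \<open>I\<close> with \<open>(P\<^sup>* + L)\<^sup>* = D\<close>, contradicting homogeneity.
  Hence \<open>P\<^sup>* = D\<close> and \<open>x D = (x P)\<^sup>* \<subseteq> I\<^sup>* = I\<close>.
\<close>

lemma
  assumes "subdomain D"
  shows subdomain_one: "1 \<in> D"
    and subdomain_add: "x \<in> D \<Longrightarrow> y \<in> D \<Longrightarrow> x + y \<in> D"
    and subdomain_mult: "x \<in> D \<Longrightarrow> y \<in> D \<Longrightarrow> x * y \<in> D"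
  using assms unfolding subdomain_def by auto

lemma
  assumes "dmodule D X"
  shows dmodule_zero: "0 \<in> X"
    and dmodule_add: "x \<in> X \<Longrightarrow> y \<in> X \<Longrightarrow> x + y \<in> X"
    and dmodule_mult: "d \<in> D \<Longrightarrow> x \<in> X \<Longrightarrow> d * x \<in> X"
  using assms unfolding dmodule_def by auto

lemma dmodule_sum:
  assumes "dmodule D X" "\<And>k. k < (n::nat) \<Longrightarrow> f k \<in> X"
  shows "(\<Sum>k<n. f k) \<in> X"
  using assms(2) by (induction n) (auto simp: dmodule_zero[OF assms(1)] dmodule_add[OF assms(1)])

lemma subdomain_dmodule: "subdomain D \<Longrightarrow> dmodule D D"
  unfolding subdomain_def dmodule_def by auto

lemma frac_ideal_dmodule: "frac_ideal D X \<Longrightarrow> dmodule D X"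
  unfolding frac_ideal_def by blast

lemma frac_ideal_integral:
  assumes "subdomain D" "dmodule D X" "X \<subseteq> D" "X \<noteq> {0}"
  shows "frac_ideal D X"
  using assms subdomain_one[OF assms(1)] unfolding frac_ideal_def by (intro conjI bexI[of _ 1]) auto

lemma dmodule_eq_if_one_mem:
  assumes "dmodule D X" "1 \<in> X" "X \<subseteq> D"
  shows "X = D"
  using assms dmodule_mult[OF assms(1) _ assms(2)] by auto

lemma mem_quot_field: "subdomain D \<Longrightarrow> x \<in> D \<Longrightarrow> x \<in> quot_field D"
  unfolding quot_field_def by (intro CollectI exI[of _ x] exI[of _ 1]) (simp add: subdomain_one)

lemma sum_lessThan_add:
  "(\<Sum>k<n + m. h k) = (\<Sum>k<n. h k) + (\<Sum>k<m. (h (n + k) :: 'b::comm_monoid_add))"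
  for n m :: nat
  by (induction m) (simp_all add: add_ac)

lemma dmodule_lin_span:
  assumes "subdomain D"
  shows "dmodule D (lin_span_in D S)"
  unfolding dmodule_def
proof (intro conjI ballI)
  show "0 \<in> lin_span_in D S"
    unfolding lin_span_in_def by (intro CollectI exI[of _ 0]) simp
next
  fix x y assume "x \<in> lin_span_in D S" "y \<in> lin_span_in D S"
  then obtain n m :: nat and c s c' s' :: "nat \<Rightarrow> 'a" where
    x: "\<forall>k<n. c k \<in> D \<and> s k \<in> S" "x = (\<Sum>k<n. c k * s k)" and
    y: "\<forall>k<m. c' k \<in> D \<and> s' k \<in> S" "y = (\<Sum>k<m. c' k * s' k)"
    unfolding lin_span_in_def by blast
  define C where "C k = (if k < n then c k else c' (k - n))" for k
  define T where "T k = (if k < n then s k else s' (k - n))" for k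
  have "\<forall>k<n + m. C k \<in> D \<and> T k \<in> S"
    using x y unfolding C_def T_def by auto
  moreover have "x + y = (\<Sum>k<n + m. C k * T k)"
    unfolding sum_lessThan_add x y C_def T_def by simp
  ultimately show "x + y \<in> lin_span_in D S"
    unfolding lin_span_in_def by blast
next
  fix d x assume d: "d \<in> D" and "x \<in> lin_span_in D S"
  then obtain n :: nat and c s :: "nat \<Rightarrow> 'a" where
    x: "\<forall>k<n. c k \<in> D \<and> s k \<in> S" "x = (\<Sum>k<n. c k * s k)"
    unfolding lin_span_in_def by blast
  have "\<forall>k<n. d * c k \<in> D \<and> s k \<in> S"
    using x d subdomain_mult[OF assms] by blast
  moreover have "d * x = (\<Sum>k<n. (d * c k) * s k)"
    unfolding x by (simp add: sum_distrib_left mult.assoc)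
  ultimately show "d * x \<in> lin_span_in D S"
    unfolding lin_span_in_def by (intro CollectI exI[of _ n] exI[of _ "\<lambda>k. d * c k"] exI[of _ s]) simp
qed

lemma lin_span_least:
  assumes "dmodule D X" "S \<subseteq> X"
  shows "lin_span_in D S \<subseteq> X"
proof
  fix x assume "x \<in> lin_span_in D S"
  then obtain n :: nat and c s :: "nat \<Rightarrow> 'a" where
    x: "\<forall>k<n. c k \<in> D \<and> s k \<in> S" "x = (\<Sum>k<n. c k * s k)"
    unfolding lin_span_in_def by blast
  then have "\<And>k. k < n \<Longrightarrow> c k * s k \<in> X"
    using assms by (blast intro: dmodule_mult)
  then show "x \<in> X"
    unfolding x(2) by (rule dmodule_sum[OF assms(1)])
qed

lemma lin_span_superset:
  assumes "subdomain D"
  shows "S \<subseteq> lin_span_in D S"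
proof
  fix x assume "x \<in> S"
  then show "x \<in> lin_span_in D S"
    unfolding lin_span_in_def using subdomain_one[OF assms]
    by (intro CollectI exI[of _ "1::nat"] exI[of _ "\<lambda>_. 1"] exI[of _ "\<lambda>_. x"]) simp
qed

lemma lin_span_mono: "S \<subseteq> T \<Longrightarrow> lin_span_in D S \<subseteq> lin_span_in D T"
  unfolding lin_span_in_def by blast

lemma frac_ideal_integral_superset:
  assumes "subdomain D" "frac_ideal D J" "J \<subseteq> X" "dmodule D X" "X \<subseteq> D"
  shows "frac_ideal D X"
proof (rule frac_ideal_integral[OF assms(1,4,5)])
  show "X \<noteq> {0}"
    using assms(2,3) dmodule_zero[OF frac_ideal_dmodule[OF assms(2)]] unfolding frac_ideal_def by blast
qed

lemma frac_ideal_lin_span: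
  assumes "subdomain D" "S \<subseteq> D" "s \<in> S" "s \<noteq> 0"
  shows "frac_ideal D (lin_span_in D S)"
proof (rule frac_ideal_integral[OF assms(1) dmodule_lin_span[OF assms(1)]])
  show "lin_span_in D S \<subseteq> D"
    by (rule lin_span_least[OF subdomain_dmodule[OF assms(1)] assms(2)])
  show "lin_span_in D S \<noteq> {0}"
    using lin_span_superset[OF assms(1)] assms(3,4) by blast
qed

lemma dmodule_scal:
  assumes "dmodule D X"
  shows "dmodule D (scal a X)"
  using assms unfolding dmodule_def scal_def
  by (auto simp: distrib_left[symmetric] mult.left_commute intro!: image_eqI)

lemma frac_ideal_scal:
  assumes "subdomain D" "frac_ideal D X" "a \<in> D" "a \<noteq> 0"
  shows "frac_ideal D (scal a X)"
proof -
  have "0 \<in> X"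
    using assms(2) dmodule_zero frac_ideal_dmodule by blast
  then obtain x d where x: "x \<in> X" "x \<noteq> 0" and d: "d \<in> D" "d \<noteq> 0" "\<forall>y\<in>X. d * y \<in> D"
    using assms(2) unfolding frac_ideal_def by blast
  have "a * x \<in> scal a X" "a * x \<noteq> 0"
    using x assms(4) unfolding scal_def by auto
  moreover have "\<forall>z\<in>scal a X. d * z \<in> D"
  proof
    fix z assume "z \<in> scal a X"
    then obtain y where "y \<in> X" "z = a * y"
      unfolding scal_def by blast
    then show "d * z \<in> D"
      using d assms(3) subdomain_mult[OF assms(1)] by (metis mult.left_commute)
  qed
  ultimately show ?thesis
    using d dmodule_scal[OF frac_ideal_dmodule[OF assms(2)]] unfolding frac_ideal_def by blast
qed

lemma principal_subset: "subdomain D \<Longrightarrow> a \<in> D \<Longrightarrow> scal a D \<subseteq> D"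
  unfolding scal_def by (auto intro: subdomain_mult)

lemma mem_principal: "subdomain D \<Longrightarrow> a \<in> scal a D"
  unfolding scal_def by (auto intro: image_eqI[of a _ 1] subdomain_one)

lemma
  assumes "dmodule D A" "dmodule D B"
  shows ideal_sum_superset_left: "A \<subseteq> ideal_sum A B"
    and ideal_sum_superset_right: "B \<subseteq> ideal_sum A B"
  using dmodule_zero[OF assms(1)] dmodule_zero[OF assms(2)] unfolding ideal_sum_def by force+

lemma ideal_sum_subset: "A \<subseteq> D \<Longrightarrow> B \<subseteq> D \<Longrightarrow> subdomain D \<Longrightarrow> ideal_sum A B \<subseteq> D"
  unfolding ideal_sum_def by (auto intro: subdomain_add)

lemma dmodule_ideal_sum:
  assumes "dmodule D A" "dmodule D B"
  shows "dmodule D (ideal_sum A B)"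
  unfolding dmodule_def
proof (intro conjI ballI)
  show "0 \<in> ideal_sum A B"
    using ideal_sum_superset_left[OF assms] dmodule_zero[OF assms(1)] by blast
next
  fix x y assume "x \<in> ideal_sum A B" "y \<in> ideal_sum A B"
  then obtain a b a' b' where "x = a + b" "y = a' + b'" "a \<in> A" "b \<in> B" "a' \<in> A" "b' \<in> B"
    unfolding ideal_sum_def by auto
  then show "x + y \<in> ideal_sum A B"
    unfolding ideal_sum_def using dmodule_add[OF assms(1)] dmodule_add[OF assms(2)]
    by (intro CollectI exI[of _ "a + a'"] exI[of _ "b + b'"]) (simp add: algebra_simps)
next
  fix d x assume "d \<in> D" "x \<in> ideal_sum A B"
  then obtain a b where "x = a + b" "a \<in> A" "b \<in> B"
    unfolding ideal_sum_def by auto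
  then show "d * x \<in> ideal_sum A B"
    unfolding ideal_sum_def using \<open>d \<in> D\<close> dmodule_mult[OF assms(1)] dmodule_mult[OF assms(2)]
    by (intro CollectI exI[of _ "d * a"] exI[of _ "d * b"]) (simp add: distrib_left)
qed

lemma frac_ideal_ideal_sum:
  assumes "subdomain D" "frac_ideal D A" "frac_ideal D B" "A \<subseteq> D" "B \<subseteq> D"
  shows "frac_ideal D (ideal_sum A B)"
proof -
  have A: "dmodule D A" and B: "dmodule D B"
    using assms(2,3) by (simp_all add: frac_ideal_dmodule)
  show ?thesis
    by (rule frac_ideal_integral_superset[OF assms(1,2) ideal_sum_superset_left[OF A B]
          dmodule_ideal_sum[OF A B] ideal_sum_subset[OF assms(4,5,1)]])
qed

lemma scal_lin_span_subset:
  assumes "dmodule D I" "\<And>y. y \<in> S \<Longrightarrow> x * y \<in> I"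
  shows "scal x (lin_span_in D S) \<subseteq> I"
proof -
  have "dmodule D {y. x * y \<in> I}"
    using assms(1) unfolding dmodule_def by (simp add: distrib_left mult.left_commute)
  then have "lin_span_in D S \<subseteq> {y. x * y \<in> I}"
    using assms(2) by (intro lin_span_least) auto
  then show ?thesis
    unfolding scal_def by blast
qed

lemma ideal_mult_localization_clear_denominator:
  assumes "subdomain D" "dmodule D I" "0 \<in> M" "1 \<notin> M"
    and mult_closed: "\<And>a b. a \<in> D \<Longrightarrow> a \<notin> M \<Longrightarrow> b \<in> D \<Longrightarrow> b \<notin> M \<Longrightarrow> a * b \<notin> M"
    and x: "x \<in> ideal_mult I (localization D M)"
  obtains s where "s \<in> D" "s \<notin> M" "s * x \<in> I"
proof -
  have "\<exists>s. s \<in> D \<and> s \<notin> M \<and> s * (\<Sum>k<n. f k * g k) \<in> I"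
    if "\<forall>k<n. f k \<in> I \<and> g k \<in> localization D M" for n :: nat and f g
    using that
  proof (induction n)
    case 0
    then show ?case
      using assms(1-4) subdomain_one dmodule_zero by auto
  next
    case (Suc n)
    then obtain s where s: "s \<in> D" "s \<notin> M" "s * (\<Sum>k<n. f k * g k) \<in> I"
      by auto
    obtain a t where at: "a \<in> D" "t \<in> D" "t \<notin> M" "g n = a / t"
      using Suc.prems unfolding localization_def by blast
    have "t \<noteq> 0"
      using at(3) assms(3) by auto
    then have "(t * s) * (\<Sum>k<Suc n. f k * g k) = t * (s * (\<Sum>k<n. f k * g k)) + (s * a) * f n"
      by (simp add: at(4) field_simps)
    also have "\<dots> \<in> I"
    proof (rule dmodule_add[OF assms(2)])
      show "t * (s * (\<Sum>k<n. f k * g k)) \<in> I"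
        using at(2) s(3) by (rule dmodule_mult[OF assms(2)])
      show "(s * a) * f n \<in> I"
        using subdomain_mult[OF assms(1) s(1) at(1)] Suc.prems by (simp add: dmodule_mult[OF assms(2)])
    qed
    finally show ?case
      using s at mult_closed subdomain_mult[OF assms(1)] by blast
  qed
  then show ?thesis
    using x that unfolding ideal_mult_def by blast
qed

lemma subset_ideal_mult_localization:
  assumes "subdomain D" "1 \<notin> M"
  shows "I \<subseteq> ideal_mult I (localization D M)"
proof
  fix i assume "i \<in> I"
  moreover have "1 \<in> localization D M"
    unfolding localization_def using assms subdomain_one[OF assms(1)]
    by (intro CollectI exI[of _ 1]) simp
  ultimately show "i \<in> ideal_mult I (localization D M)"
    unfolding ideal_mult_def
    by (intro CollectI exI[of _ "1::nat"] exI[of _ "\<lambda>_. i"] exI[of _ "\<lambda>_. 1"]) simp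
qed

locale star_domain =
  fixes D :: "'a::field set" and st :: "'a set \<Rightarrow> 'a set"
  assumes subdomain: "subdomain D" and star_op: "star_op D st"
begin

lemma frac_ideal_star: "frac_ideal D X \<Longrightarrow> frac_ideal D (st X)"
  using star_op unfolding star_op_def by (elim conjE) simp

lemma star_extensive: "frac_ideal D X \<Longrightarrow> X \<subseteq> st X"
  using star_op unfolding star_op_def by (elim conjE) simp

lemma star_idem: "frac_ideal D X \<Longrightarrow> st (st X) = st X"
  using star_op unfolding star_op_def by (elim conjE) simp

lemma star_mono: "frac_ideal D X \<Longrightarrow> frac_ideal D Y \<Longrightarrow> X \<subseteq> Y \<Longrightarrow> st X \<subseteq> st Y"
  using star_op unfolding star_op_def by (elim conjE) simp

lemma star_scal:
  "x \<in> D \<Longrightarrow> x \<noteq> 0 \<Longrightarrow> frac_ideal D X \<Longrightarrow> st (scal x X) = scal x (st X)"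
  using star_op mem_quot_field[OF subdomain] unfolding star_op_def by (elim conjE) simp

lemma star_ideal_star: "frac_ideal D X \<Longrightarrow> star_ideal D st (st X)"
  unfolding star_ideal_def by (simp add: frac_ideal_star star_idem)

lemma star_domain_eq: "st D = D"
proof -
  have "st (scal 1 D) = scal 1 D"
    using star_op mem_quot_field[OF subdomain subdomain_one[OF subdomain]]
    unfolding star_op_def by auto
  moreover have "scal 1 D = D"
    unfolding scal_def by simp
  ultimately show ?thesis
    by simp
qed

lemma frac_ideal_domain: "frac_ideal D D"
  using subdomain subdomain_one[OF subdomain]
  by (intro frac_ideal_integral subdomain_dmodule) auto

lemma star_subset_domain: "frac_ideal D X \<Longrightarrow> X \<subseteq> D \<Longrightarrow> st X \<subseteq> D"
  using star_mono[OF _ frac_ideal_domain] star_domain_eq by auto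

lemma star_eq_domain_if_one_mem:
  "frac_ideal D X \<Longrightarrow> X \<subseteq> D \<Longrightarrow> 1 \<in> st X \<Longrightarrow> st X = D"
  by (intro dmodule_eq_if_one_mem frac_ideal_dmodule frac_ideal_star star_subset_domain)

lemma lin_span_generators_subset_star:
  "frac_ideal D (lin_span_in D S) \<Longrightarrow> S \<subseteq> st (lin_span_in D S)"
  using lin_span_superset[OF subdomain] star_extensive by blast

lemma finite_type_star_lin_span_superset:
  assumes "finite S" "S \<subseteq> D" "S0 \<subseteq> S" "frac_ideal D (lin_span_in D S0)"
  shows "frac_ideal D (lin_span_in D S)"
    and "finite_type D st (st (lin_span_in D S))"
    and "st (lin_span_in D S0) \<subseteq> st (lin_span_in D S)"
    and "st (lin_span_in D S) \<subseteq> D"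
proof -
  have span: "lin_span_in D S0 \<subseteq> lin_span_in D S" "lin_span_in D S \<subseteq> D"
    using assms(2,3) lin_span_mono lin_span_least[OF subdomain_dmodule[OF subdomain]] by blast+
  show P: "frac_ideal D (lin_span_in D S)"
    by (rule frac_ideal_integral_superset[OF subdomain assms(4) span(1) dmodule_lin_span[OF subdomain] span(2)])
  show "finite_type D st (st (lin_span_in D S))"
    using assms(1) P star_ideal_star unfolding finite_type_def fin_gen_def by blast
  show "st (lin_span_in D S0) \<subseteq> st (lin_span_in D S)"
    by (rule star_mono[OF assms(4) P span(1)])
  show "st (lin_span_in D S) \<subseteq> D"
    by (rule star_subset_domain[OF P span(2)])
qed

lemma mem_star_ideal_if_scal_subset:
  assumes "star_ideal D st I" "x \<in> D" "frac_ideal D P" "st P = D" "scal x P \<subseteq> I"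
  shows "x \<in> I"
proof (cases "x = 0")
  case True
  then show ?thesis
    using assms(1) dmodule_zero frac_ideal_dmodule unfolding star_ideal_def by blast
next
  case False
  have I: "frac_ideal D I" "st I = I"
    using assms(1) unfolding star_ideal_def by auto
  have "scal x D = st (scal x P)"
    using star_scal[OF assms(2) False assms(3)] assms(4) by simp
  also have "\<dots> \<subseteq> I"
    using star_mono[OF frac_ideal_scal[OF subdomain assms(3,2) False] I(1) assms(5)] I(2) by simp
  finally show ?thesis
    using mem_principal[OF subdomain] by blast
qed

lemma star_ideal_sum_eq_domain_if_one_mem:
  assumes "frac_ideal D A" "frac_ideal D B" "A \<subseteq> D" "B \<subseteq> D"
    and S: "frac_ideal D (lin_span_in D S)" "S \<subseteq> ideal_sum A B" "1 \<in> st (lin_span_in D S)"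
  shows "st (ideal_sum A B) = D"
proof (rule star_eq_domain_if_one_mem)
  show AB: "frac_ideal D (ideal_sum A B)"
    by (rule frac_ideal_ideal_sum[OF subdomain assms(1-4)])
  show "ideal_sum A B \<subseteq> D"
    by (rule ideal_sum_subset[OF assms(3,4) subdomain])
  have "lin_span_in D S \<subseteq> ideal_sum A B"
    by (rule lin_span_least[OF frac_ideal_dmodule[OF AB] S(2)])
  then show "1 \<in> st (ideal_sum A B)"
    using star_mono[OF S(1) AB] S(3) by blast
qed

lemma finite_character_one_mem:
  assumes "finite_character D st" "frac_ideal D X" "1 \<in> st X"
  obtains S where "finite S" "S \<subseteq> X" "frac_ideal D (lin_span_in D S)" "1 \<in> st (lin_span_in D S)"
proof -
  obtain J where J: "frac_ideal D J" "fin_gen D J" "J \<subseteq> X" "1 \<in> st J"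
    using assms unfolding finite_character_def by blast
  then obtain S where "finite S" "J = lin_span_in D S"
    unfolding fin_gen_def by blast
  then show ?thesis
    using that J lin_span_superset[OF subdomain, of S] by blast
qed

end

locale star_maximal = star_domain +
  fixes M :: "'a::field set"
  assumes maximal: "max_star_ideal D st M"
begin

lemma
  shows frac_ideal_max: "frac_ideal D M"
    and star_max: "st M = M"
    and max_subset: "M \<subseteq> D"
    and max_proper: "M \<noteq> D"
    and dmodule_max: "dmodule D M"
  using maximal unfolding max_star_ideal_def star_ideal_def frac_ideal_def by auto

lemma zero_mem_max: "0 \<in> M"
  by (rule dmodule_zero[OF dmodule_max])

lemma one_not_mem_max: "1 \<notin> M"
  using dmodule_eq_if_one_mem[OF dmodule_max _ max_subset] max_proper by blast

lemma
  assumes "a \<in> D" "a \<notin> M"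
  shows frac_ideal_max_sum_principal: "frac_ideal D (ideal_sum M (scal a D))"
    and max_sum_principal_subset: "ideal_sum M (scal a D) \<subseteq> D"
proof -
  have "a \<noteq> 0"
    using assms zero_mem_max by auto
  then have "frac_ideal D (scal a D)"
    by (rule frac_ideal_scal[OF subdomain frac_ideal_domain assms(1)])
  then show "frac_ideal D (ideal_sum M (scal a D))"
    using frac_ideal_ideal_sum[OF subdomain frac_ideal_max _ max_subset principal_subset[OF subdomain assms(1)]]
    by blast
  show "ideal_sum M (scal a D) \<subseteq> D"
    by (rule ideal_sum_subset[OF max_subset principal_subset[OF subdomain assms(1)] subdomain])
qed

lemma star_max_sum_principal:
  assumes "a \<in> D" "a \<notin> M"
  shows "st (ideal_sum M (scal a D)) = D"
proof -
  let ?Q = "ideal_sum M (scal a D)"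
  have Q: "frac_ideal D ?Q" "?Q \<subseteq> D"
    using frac_ideal_max_sum_principal[OF assms] max_sum_principal_subset[OF assms] by blast+
  have sums: "M \<subseteq> ?Q" "scal a D \<subseteq> ?Q"
    using dmodule_max dmodule_scal[OF subdomain_dmodule[OF subdomain]]
    by (simp_all add: ideal_sum_superset_left ideal_sum_superset_right)
  have "M \<subseteq> st ?Q" "a \<in> st ?Q"
    using sums star_extensive[OF Q(1)] mem_principal[OF subdomain] by blast+
  then show ?thesis
    using maximal star_ideal_star[OF Q(1)] star_subset_domain[OF Q] assms(2)
    unfolding max_star_ideal_def by blast
qed

lemma mult_not_mem_max:
  assumes a: "a \<in> D" "a \<notin> M" and b: "b \<in> D" "b \<notin> M"
  shows "a * b \<notin> M"
proof
  assume ab: "a * b \<in> M"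
  let ?Q = "ideal_sum M (scal a D)"
  have "b \<noteq> 0"
    using b zero_mem_max by auto
  have Q: "frac_ideal D ?Q"
    by (rule frac_ideal_max_sum_principal[OF a])
  have "scal b ?Q \<subseteq> M"
  proof
    fix y assume "y \<in> scal b ?Q"
    then obtain m d where "m \<in> M" "d \<in> D" "y = b * m + d * (a * b)"
      unfolding scal_def ideal_sum_def by (auto simp: algebra_simps)
    then show "y \<in> M"
      using ab b dmodule_max by (auto intro: dmodule_add dmodule_mult)
  qed
  then have "st (scal b ?Q) \<subseteq> M"
    using star_mono[OF frac_ideal_scal[OF subdomain Q b(1) \<open>b \<noteq> 0\<close>] frac_ideal_max] star_max
    by simp
  moreover have "st (scal b ?Q) = scal b D"
    using star_scal[OF b(1) \<open>b \<noteq> 0\<close> Q] star_max_sum_principal[OF a] by simp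
  ultimately show False
    using mem_principal[OF subdomain] b(2) by blast
qed

lemma finite_max_principal_decomposition:
  assumes "finite_character D st" "s \<in> D" "s \<notin> M"
  obtains S m d where "finite S" "frac_ideal D (lin_span_in D S)" "1 \<in> st (lin_span_in D S)"
    "\<And>g. g \<in> S \<Longrightarrow> m g \<in> M \<and> d g \<in> D \<and> g = m g + s * d g"
proof -
  let ?Q = "ideal_sum M (scal s D)"
  have "frac_ideal D ?Q"
    by (rule frac_ideal_max_sum_principal[OF assms(2,3)])
  moreover have "1 \<in> st ?Q"
    using star_max_sum_principal[OF assms(2,3)] subdomain_one[OF subdomain] by simp
  ultimately obtain S where
    S: "finite S" "S \<subseteq> ?Q" "frac_ideal D (lin_span_in D S)" "1 \<in> st (lin_span_in D S)"
    using finite_character_one_mem[OF assms(1)] by blast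
  then have "\<forall>g\<in>S. \<exists>m d. m \<in> M \<and> d \<in> D \<and> g = m + s * d"
    unfolding ideal_sum_def scal_def by blast
  then obtain m d where "\<forall>g\<in>S. m g \<in> M \<and> d g \<in> D \<and> g = m g + s * d g"
    by metis
  then show ?thesis
    using that S by blast
qed

lemma star_lin_span_insert_eq_domain:
  assumes fc: "finite_character D st" and homog: "star_homog D st I" and "I \<subseteq> M"
    and s: "s \<in> D" "s \<notin> M"
    and S0: "finite S0" "frac_ideal D (lin_span_in D S0)" "I = st (lin_span_in D S0)"
  shows "st (lin_span_in D (insert s S0)) = D"
proof (rule ccontr)
  let ?A = "st (lin_span_in D (insert s S0))"
  assume "?A \<noteq> D"
  have "S0 \<subseteq> M"
    using lin_span_generators_subset_star[OF S0(2)] S0(3) assms(3) by blast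
  then have S0D: "S0 \<subseteq> D"
    using max_subset by blast
  have "finite (insert s S0)" "insert s S0 \<subseteq> D" "S0 \<subseteq> insert s S0"
    using S0(1) S0D s by auto
  note A = finite_type_star_lin_span_superset[OF this S0(2), folded S0(3)]
  obtain S m d where S: "finite S" "frac_ideal D (lin_span_in D S)" "1 \<in> st (lin_span_in D S)"
    and md: "\<And>g. g \<in> S \<Longrightarrow> m g \<in> M \<and> d g \<in> D \<and> g = m g + s * d g"
    using finite_max_principal_decomposition[OF fc s] by blast
  let ?L = "st (lin_span_in D (m ` S \<union> S0))"
  have "m ` S \<union> S0 \<subseteq> M"
    using md \<open>S0 \<subseteq> M\<close> by auto
  then have LM: "lin_span_in D (m ` S \<union> S0) \<subseteq> M" and LD: "m ` S \<union> S0 \<subseteq> D"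
    using lin_span_least[OF dmodule_max] max_subset by blast+
  have "finite (m ` S \<union> S0)" "S0 \<subseteq> m ` S \<union> S0"
    using S(1) S0(1) by auto
  note L = finite_type_star_lin_span_superset[OF this(1) LD this(2) S0(2), folded S0(3)]
  have "?L \<subseteq> M"
    using star_mono[OF L(1) frac_ideal_max LM] star_max by simp
  have proper: "?A \<subset> D" "?L \<subset> D"
    using A(4) \<open>?A \<noteq> D\<close> \<open>?L \<subseteq> M\<close> max_subset max_proper by blast+
  have "S \<subseteq> ideal_sum ?A ?L"
  proof
    fix g assume "g \<in> S"
    have "s \<in> ?A" "m g \<in> ?L"
      using lin_span_generators_subset_star[OF A(1)] lin_span_generators_subset_star[OF L(1)] \<open>g \<in> S\<close>
      by blast+
    then have "d g * s \<in> ?A" "m g \<in> ?L"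
      using md[OF \<open>g \<in> S\<close>] dmodule_mult[OF frac_ideal_dmodule[OF frac_ideal_star[OF A(1)]]] by blast+
    moreover have "g = d g * s + m g"
      using md[OF \<open>g \<in> S\<close>] by (simp add: add.commute mult.commute)
    ultimately show "g \<in> ideal_sum ?A ?L"
      unfolding ideal_sum_def by blast
  qed
  then have "st (ideal_sum ?A ?L) = D"
    using star_ideal_sum_eq_domain_if_one_mem[OF frac_ideal_star[OF A(1)] frac_ideal_star[OF L(1)] A(4) L(4)] S
    by blast
  moreover have "st (ideal_sum ?A ?L) \<noteq> D"
    using homog A(2,3) L(2,3) proper unfolding star_homog_def by blast
  ultimately show False
    by contradiction
qed

theorem ideal_mult_localization_inter_domain:
  assumes fc: "finite_character D st" and homog: "star_homog D st I" and "I \<subseteq> M"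
  shows "ideal_mult I (localization D M) \<inter> D = I"
proof
  obtain J where J: "frac_ideal D J" "fin_gen D J" "I = st J" and I: "star_ideal D st I" "I \<subset> D"
    using homog unfolding star_homog_def finite_type_def by blast
  then obtain S0 where S0: "finite S0" "J = lin_span_in D S0"
    unfolding fin_gen_def by blast
  have dI: "dmodule D I"
    using I(1) frac_ideal_dmodule unfolding star_ideal_def by blast
  have "S0 \<subseteq> I"
    using lin_span_generators_subset_star J S0(2) by blast
  show "ideal_mult I (localization D M) \<inter> D \<subseteq> I"
  proof
    fix x assume x: "x \<in> ideal_mult I (localization D M) \<inter> D"
    then obtain s where s: "s \<in> D" "s \<notin> M" "s * x \<in> I"
      using ideal_mult_localization_clear_denominator[OF subdomain dI zero_mem_max one_not_mem_max
          mult_not_mem_max] by blast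
    let ?P = "lin_span_in D (insert s S0)"
    have "s \<noteq> 0"
      using s zero_mem_max by auto
    then have "frac_ideal D ?P"
      using frac_ideal_lin_span[OF subdomain, of "insert s S0" s] s(1) \<open>S0 \<subseteq> I\<close> I(2) by blast
    moreover have "st ?P = D"
      using star_lin_span_insert_eq_domain[OF fc homog assms(3) s(1,2) S0(1)] J S0(2) by blast
    moreover have "scal x ?P \<subseteq> I"
      using s(3) \<open>S0 \<subseteq> I\<close> x dmodule_mult[OF dI]
      by (intro scal_lin_span_subset[OF dI]) (auto simp: mult.commute[of x s])
    ultimately show "x \<in> I"
      using mem_star_ideal_if_scal_subset[OF I(1)] x by blast
  qed
  show "I \<subseteq> ideal_mult I (localization D M) \<inter> D"
    using subset_ideal_mult_localization[OF subdomain one_not_mem_max] I(2) by blast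
qed

end

theorem propositionG:
  fixes D :: "'a::field set" and st :: "'a set \<Rightarrow> 'a set" and I M :: "'a set"
  assumes "subdomain D"
    and "star_op D st"
    and "finite_character D st"
    and "star_homog D st I"
    and "max_star_ideal D st M"
    and "I \<subseteq> M"
  shows "ideal_mult I (localization D M) \<inter> D = I"
proof -
  interpret star_maximal D st M
    using assms(1,2,5) by unfold_locales
  show ?thesis
    by (rule ideal_mult_localization_inter_domain[OF assms(3,4,6)])
qed

end
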